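(* Let $E_2$ be a para-Hilbert space and let $E_1=(X_{E_1},H_{E_1},Y_{E_1})$ be a split subspace of $E_2$. Then $i_{E_2}(X_{E_1})$ is dense in $H_{E_1}$ and $j_{E_2}(H_{E_1})$ is dense in $Y_{E_1}$.
   Context: A para-Hilbert space $E$ consists of Banach spaces $X_E,Y_E$, a Hilbert space $H_E$ with inner product and Riesz isomorphism $I_E\colon H_E\to H_E'$, bounded linear injections with dense image $i_E\colon X_E\to H_E$, $j_E\colon H_E\to Y_E$, and an isomorphism of Banach spaces $J_E\colon X_E\to Y_E'$ with $j_E'\circ J_E=I_E\circ i_E$ ($'$ denotes duals and dual operators). A morphism $P\colon E\to E$ is a triple of bounded linear operators $X_P,H_P,Y_P$ on $X_E,H_E,Y_E$ with $i_EX_P=H_Pi_E$, $j_EH_P=Y_Pj_E$. A triple $E_1=(X_{E_1},H_{E_1},Y_{E_1})$ of split (complemented) closed subspaces $X_{E_1}\subset X_{E_2}$, $H_{E_1}\subset H_{E_2}$, $Y_{E_1}\subset Y_{E_2}$ with $i_{E_2}(X_{E_1})\subset H_{E_1}$ and $j_{E_2}(H_{E_1})\subset Y_{E_1}$ is a split subspace of $E_2$ if there is a morphism $P\colon E_2\to E_2$ with $PP=P$ and $X_P(X_{E_2})=X_{E_1}$, $H_P(H_{E_2})=H_{E_1}$, $Y_P(Y_{E_2})=Y_{E_1}$. *)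

theory Defs
  imports "HOL-Analysis.Analysis"
begin

text \<open>The spaces X, H, Y are
  the (whole) types. The Riesz map is I h = inner h, so j' o J = I o i reads
  (J x)(j h) = inner (i x) h.\<close>
definition para_hilbert ::
  "('x::banach \<Rightarrow> 'h::{real_inner,complete_space}) \<Rightarrow> ('h \<Rightarrow> 'y::banach)
   \<Rightarrow> ('x \<Rightarrow> ('y \<Rightarrow>\<^sub>L real)) \<Rightarrow> bool" where
  "para_hilbert i j J \<longleftrightarrow>
     bounded_linear i \<and> inj i \<and> closure (range i) = UNIV \<and>
     bounded_linear j \<and> inj j \<and> closure (range j) = UNIV \<and>
     bounded_linear J \<and> bij J \<and> bounded_linear (inv J) \<and>
     (\<forall>x h. blinfun_apply (J x) (j h) = inner (i x) h)"

definition para_morphism ::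
  "('x::real_normed_vector \<Rightarrow> 'h::real_normed_vector) \<Rightarrow> ('h \<Rightarrow> 'y::real_normed_vector)
   \<Rightarrow> ('x \<Rightarrow> 'x) \<Rightarrow> ('h \<Rightarrow> 'h) \<Rightarrow> ('y \<Rightarrow> 'y) \<Rightarrow> bool" where
  "para_morphism i j PX PH PY \<longleftrightarrow>
     bounded_linear PX \<and> bounded_linear PH \<and> bounded_linear PY \<and>
     i \<circ> PX = PH \<circ> i \<and> j \<circ> PH = PY \<circ> j"

definition split_closed_subspace :: "'a::real_normed_vector set \<Rightarrow> bool" where
  "split_closed_subspace S \<longleftrightarrow> subspace S \<and> closed S \<and>
     (\<exists>T. subspace T \<and> closed T \<and> S \<inter> T = {0} \<and>
          {s + t | s t. s \<in> S \<and> t \<in> T} = UNIV)"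

end

theory Submission
  imports Defs
begin

lemma range_subset_closure_image_range_if_intertwines:
  fixes f :: "'a \<Rightarrow> 'b::topological_space"
  assumes dense: "closure (range f) = UNIV"
    and cont: "continuous_on UNIV P"
    and intertwines: "f \<circ> Q = P \<circ> f"
  shows "range P \<subseteq> closure (f ` range Q)"
proof -
  have "P ` range f = f ` range Q"
    using intertwines by (auto simp: fun_eq_iff image_iff)
  then have "P ` range f \<subseteq> closure (f ` range Q)"
    using closure_subset by blast
  then have "P ` closure (range f) \<subseteq> closure (f ` range Q)"
    using cont dense by (intro image_closure_subset) auto
  then show ?thesis
    using dense by simp
qed

theorem lemma2p7:
  fixes i :: "'x::banach \<Rightarrow> 'h::{real_inner,complete_space}"
    and j :: "'h \<Rightarrow> 'y::banach"
    and J :: "'x \<Rightarrow> ('y \<Rightarrow>\<^sub>L real)"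
    and X1 :: "'x set" and H1 :: "'h set" and Y1 :: "'y set"
  assumes "para_hilbert i j J"
    and "split_closed_subspace X1" and "split_closed_subspace H1" and "split_closed_subspace Y1"
    and "i ` X1 \<subseteq> H1" and "j ` H1 \<subseteq> Y1"
    and "\<exists>PX PH PY. para_morphism i j PX PH PY \<and>
           PX \<circ> PX = PX \<and> PH \<circ> PH = PH \<and> PY \<circ> PY = PY \<and>
           range PX = X1 \<and> range PH = H1 \<and> range PY = Y1"
  shows "H1 \<subseteq> closure (i ` X1) \<and> Y1 \<subseteq> closure (j ` H1)"
proof -
  obtain PX PH PY where morphism: "para_morphism i j PX PH PY"
    and ranges: "range PX = X1" "range PH = H1" "range PY = Y1"
    using assms(7) by blast
  have dense: "closure (range i) = UNIV" "closure (range j) = UNIV"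
    using assms(1) by (auto simp: para_hilbert_def)
  have "continuous_on UNIV PH" "continuous_on UNIV PY"
    using morphism by (auto simp: para_morphism_def intro: linear_continuous_on)
  moreover have "i \<circ> PX = PH \<circ> i" "j \<circ> PH = PY \<circ> j"
    using morphism by (auto simp: para_morphism_def)
  ultimately show ?thesis
    using range_subset_closure_image_range_if_intertwines[OF dense(1)]
      range_subset_closure_image_range_if_intertwines[OF dense(2)] ranges
    by blast
qed

end
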